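(* Let $\mathcal{J}=\langle U,g,f\rangle$ satisfy the standing assumptions below, and let $(\theta^k)_{k\ge1}$ be a sequence of evaluations satisfying the long-term condition. Then for every $\mu\in\Delta(\mathbb{R}_+)$ and every $y_0\in\mathbb{R}^d$, $$\inf_{t\in\mathbb{R}_+}V_{\mathcal{T}_t\sharp\mu}(y_0)\leq\liminf_k V_{\theta^k}(y_0).$$ In particular, for all $y_0\in\mathbb{R}^d$, $\sup_{k\in\mathbb{N}^*}\inf_{t\in\mathbb{R}_+}V_{\mathcal{T}_t\sharp\theta^k}(y_0)\leq\liminf_k V_{\theta^k}(y_0)$.
   Context: Setting: $U$ is a metric space, $g:\mathbb{R}^d\times U\to[0,1]$ is Borel measurable, $f:\mathbb{R}^d\times U\to\mathbb{R}^d$ is Borel measurable with $\|f(y,u)-f(\bar y,u)\|\leq L\|y-\bar y\|$ and $\|f(y,u)\|\leq a(1+\|y\|)$ for constants $L\ge0,a>0$. $\mathcal{U}$ is the set of measurable controls $u:[0,+\infty)\to U$; $y(t,u,y_0)$ is the solution of $y'=f(y,u)$, $y(0)=y_0$. An evaluation is $\theta\in\Delta(\mathbb{R}_+)$; $V_\theta(y_0)=\inf_{u\in\mathcal{U}}\int_{[0,+\infty)} g(y(s,u,y_0),u(s))\,d\theta(s)$; $\mathcal{T}_t\sharp\theta$ is the push-forward of $\theta$ by $s\mapsto s+t$, so $V_{\mathcal{T}_t\sharp\theta}(y_0)=\inf_{u\in\mathcal{U}}\int_{[0,+\infty)} g(y(s+t,u,y_0),u(s+t))\,d\theta(s)$.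 $TV_s(\theta)=\sup_{Q\in\mathcal{B}(\mathbb{R}_+)}|\theta(Q)-\theta(Q+s)|$; $(\theta^k)$ satisfies the long-term condition if $\sup_{0\le s\le S}TV_s(\theta^k)\to0$ as $k\to\infty$ for every $S>0$. *)

theory Defs
  imports "HOL-Analysis.Analysis" "HOL-Probability.Probability"
begin

text \<open>Evaluations: probability measures on R_+, represented as Borel probability
measures on the real line that give no mass to the negative half-line.\<close>
definition evaluation :: "real measure \<Rightarrow> bool" where
  "evaluation \<theta> \<longleftrightarrow> prob_space \<theta> \<and> sets \<theta> = sets borel \<and> emeasure \<theta> {..<0} = 0"

text \<open>Measurable controls u : [0,+oo) -> U (extended arbitrarily to negative times).\<close>
definition controls :: "(real \<Rightarrow> 'u::metric_space) set" where
  "controls = {u. u \<in> borel_measurable borel}"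

definition is_solution ::
  "('y::euclidean_space \<Rightarrow> 'u \<Rightarrow> 'y) \<Rightarrow> (real \<Rightarrow> 'u) \<Rightarrow> 'y \<Rightarrow> (real \<Rightarrow> 'y) \<Rightarrow> bool" where
  "is_solution f u y0 y \<longleftrightarrow>
     (\<forall>t\<ge>0. (\<lambda>s. f (y s) (u s)) integrable_on {0..t} \<and>
             y t = y0 + integral {0..t} (\<lambda>s. f (y s) (u s)))"

definition traj ::
  "('y::euclidean_space \<Rightarrow> 'u \<Rightarrow> 'y) \<Rightarrow> (real \<Rightarrow> 'u) \<Rightarrow> 'y \<Rightarrow> real \<Rightarrow> 'y" where
  "traj f u y0 = (THE y. is_solution f u y0 y \<and> (\<forall>t<0. y t = y0))"

definition V ::
  "('y::euclidean_space \<Rightarrow> 'u::metric_space \<Rightarrow> 'y) \<Rightarrow> ('y \<Rightarrow> 'u \<Rightarrow> real) \<Rightarrow> real measure \<Rightarrow> 'y \<Rightarrow> real" where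
  "V f g \<theta> y0 = (INF u\<in>controls. \<integral>s. g (traj f u y0 s) (u s) \<partial>\<theta>)"

definition shift_eval :: "real \<Rightarrow> real measure \<Rightarrow> real measure" where
  "shift_eval t \<theta> = distr \<theta> borel (\<lambda>s. s + t)"

definition TV :: "real \<Rightarrow> real measure \<Rightarrow> real" where
  "TV s \<theta> = (SUP Q\<in>{Q. Q \<in> sets borel \<and> Q \<subseteq> {0..}}.
                 \<bar>measure \<theta> Q - measure \<theta> ((\<lambda>q. q + s) ` Q)\<bar>)"

definition long_term :: "(nat \<Rightarrow> real measure) \<Rightarrow> bool" where
  "long_term \<theta>s \<longleftrightarrow> (\<forall>S>0. (\<lambda>k. SUP s\<in>{0..S}. TV s (\<theta>s k)) \<longlonglongrightarrow> 0)"

end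

theory Submission
  imports Defs
begin

(*
  Fix a control u, let h(s) = g(y(s), u(s)) in [0,1] be its running cost, and let I be the infimum
  over t of the values of the shifted evaluations of mu. Then I <= int h(s + t) dmu(s) for every
  t >= 0; averaging t against theta_k and exchanging the integrals gives
  I <= int (int h(s + t) dtheta_k(t)) dmu(s). For s <= S the inner integral exceeds the theta_k-cost
  of u by at most TV_s(theta_k), and the points s > S carry mu-mass mu(S, oo). Hence
  I <= V_theta_k(y0) + sup_{s <= S} TV_s(theta_k) + mu(S, oo), and the long-term condition makes
  the error small for large k once S is large.
*)

lemma nn_integral_layer_cake:
  fixes h :: "'a \<Rightarrow> real"
  assumes "sigma_finite_measure M"
    and hm: "h \<in> borel_measurable M" and h0: "\<And>x. x \<in> space M \<Longrightarrow> 0 \<le> h x"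
  shows "(\<integral>\<^sup>+x. ennreal (h x) \<partial>M)
           = (\<integral>\<^sup>+r. indicator {0..} r * emeasure M {x \<in> space M. r < h x} \<partial>lborel)"
    and "(\<lambda>r. indicator {0..} r * emeasure M {x \<in> space M. r < h x}) \<in> borel_measurable lborel"
proof -
  interpret M: sigma_finite_measure M by fact
  interpret pair_sigma_finite lborel M
    by (simp add: pair_sigma_finite_def lborel.sigma_finite_measure_axioms M.sigma_finite_measure_axioms)
  define F where "F r x = ennreal (indicator {0..} r * (if r < h x then 1 else 0))" for r x
  have F_meas: "case_prod F \<in> borel_measurable (lborel \<Otimes>\<^sub>M M)"
    unfolding F_def using hm by measurable
  have F_slice: "(\<integral>\<^sup>+x. F r x \<partial>M) = indicator {0..} r * emeasure M {x \<in> space M. r < h x}" for r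
  proof -
    have "(\<integral>\<^sup>+x. F r x \<partial>M) = (\<integral>\<^sup>+x. indicator {0..} r * indicator {x \<in> space M. r < h x} x \<partial>M)"
      by (rule nn_integral_cong) (auto simp: F_def indicator_def)
    also have "\<dots> = indicator {0..} r * emeasure M {x \<in> space M. r < h x}"
      using hm by (intro nn_integral_cmult_indicator) measurable
    finally show ?thesis .
  qed
  have "(\<integral>\<^sup>+x. ennreal (h x) \<partial>M) = (\<integral>\<^sup>+x. (\<integral>\<^sup>+r. F r x \<partial>lborel) \<partial>M)"
  proof (rule nn_integral_cong)
    fix x assume "x \<in> space M"
    hence "(\<integral>\<^sup>+r. F r x \<partial>lborel) = (\<integral>\<^sup>+r. indicator {0..<h x} r \<partial>lborel)"
      by (intro nn_integral_cong) (auto simp: F_def indicator_def)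
    thus "ennreal (h x) = (\<integral>\<^sup>+r. F r x \<partial>lborel)"
      using h0 \<open>x \<in> space M\<close> by simp
  qed
  also have "\<dots> = (\<integral>\<^sup>+r. (\<integral>\<^sup>+x. F r x \<partial>M) \<partial>lborel)"
    by (rule Fubini'[OF F_meas])
  finally show "(\<integral>\<^sup>+x. ennreal (h x) \<partial>M)
           = (\<integral>\<^sup>+r. indicator {0..} r * emeasure M {x \<in> space M. r < h x} \<partial>lborel)"
    by (simp add: F_slice)
  show "(\<lambda>r. indicator {0..} r * emeasure M {x \<in> space M. r < h x}) \<in> borel_measurable lborel"
    using M.borel_measurable_nn_integral[OF F_meas] by (simp add: F_slice)
qed

lemma integral_le_of_measure_le_plus:
  fixes h :: "'a \<Rightarrow> real"
  assumes "finite_measure \<nu>" and "finite_measure \<theta>" and sets_eq: "sets \<nu> = sets \<theta>"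
    and hm: "h \<in> borel_measurable \<theta>" and h01: "\<And>x. x \<in> space \<theta> \<Longrightarrow> 0 \<le> h x \<and> h x \<le> 1"
    and "c \<ge> 0" and dom: "\<And>A. A \<in> sets \<theta> \<Longrightarrow> measure \<nu> A \<le> measure \<theta> A + c"
  shows "(\<integral>x. h x \<partial>\<nu>) \<le> (\<integral>x. h x \<partial>\<theta>) + c"
proof -
  interpret \<nu>: finite_measure \<nu> by fact
  interpret \<theta>: finite_measure \<theta> by fact
  have space_eq: "space \<nu> = space \<theta>" using sets_eq by (rule sets_eq_imp_space_eq)
  have hm': "h \<in> borel_measurable \<nu>" using hm by (simp add: measurable_cong_sets[OF sets_eq refl])
  define L where "L M r = indicator {0..} r * emeasure M {x \<in> space M. r < h x}" for M r
  have layer_le: "L \<nu> r \<le> L \<theta> r + indicator {0..<1} r * ennreal c" for r :: real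
  proof -
    consider "r < 0" | "1 \<le> r" | "0 \<le> r" "r < 1" by linarith
    thus ?thesis
    proof cases
      case 1 thus ?thesis by (simp add: L_def)
    next
      case 2
      hence empty: "{x \<in> space \<nu>. r < h x} = {}" using h01 by (fastforce simp: space_eq)
      show ?thesis unfolding L_def empty by simp
    next
      case 3
      define A where "A = {x \<in> space \<theta>. r < h x}"
      have "A \<in> sets \<theta>" unfolding A_def using hm by measurable
      have "emeasure \<nu> A = ennreal (measure \<nu> A)" by (rule \<nu>.emeasure_eq_measure)
      also have "\<dots> \<le> ennreal (measure \<theta> A + c)" using dom[OF \<open>A \<in> sets \<theta>\<close>] by (rule ennreal_leI)
      also have "\<dots> = emeasure \<theta> A + ennreal c"
        using \<open>c \<ge> 0\<close> by (simp add: \<theta>.emeasure_eq_measure)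
      finally show ?thesis using 3 by (simp add: L_def A_def space_eq)
    qed
  qed
  have L\<theta>_meas: "L \<theta> \<in> borel_measurable lborel"
    unfolding L_def using hm h01 \<theta>.sigma_finite_measure_axioms by (intro nn_integral_layer_cake(2)) auto
  have "(\<integral>\<^sup>+x. ennreal (h x) \<partial>\<nu>) = (\<integral>\<^sup>+r. L \<nu> r \<partial>lborel)"
    unfolding L_def using hm' h01 by (intro nn_integral_layer_cake(1)) (auto simp: space_eq \<nu>.sigma_finite_measure_axioms)
  also have "\<dots> \<le> (\<integral>\<^sup>+r. L \<theta> r + indicator {0..<1} r * ennreal c \<partial>lborel)"
    by (intro nn_integral_mono layer_le)
  also have "\<dots> = (\<integral>\<^sup>+r. L \<theta> r \<partial>lborel) + (\<integral>\<^sup>+r. indicator {0..<1::real} r * ennreal c \<partial>lborel)"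
    by (rule nn_integral_add) (use L\<theta>_meas in measurable)
  also have "\<dots> = (\<integral>\<^sup>+x. ennreal (h x) \<partial>\<theta>) + ennreal c"
    unfolding L_def using hm h01 \<theta>.sigma_finite_measure_axioms
    by (subst nn_integral_layer_cake(1)) (auto simp: mult.commute[of _ "ennreal c"] nn_integral_cmult_indicator)
  finally have nn_le: "(\<integral>\<^sup>+x. ennreal (h x) \<partial>\<nu>) \<le> (\<integral>\<^sup>+x. ennreal (h x) \<partial>\<theta>) + ennreal c" .
  have "(\<integral>\<^sup>+x. ennreal (h x) \<partial>\<theta>) \<le> (\<integral>\<^sup>+x. 1 \<partial>\<theta>)"
    using h01 by (intro nn_integral_mono) simp
  also have "\<dots> < \<infinity>"
    using \<theta>.emeasure_finite[of "space \<theta>"] by (simp add: less_top[symmetric])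
  finally have finite: "(\<integral>\<^sup>+x. ennreal (h x) \<partial>\<theta>) < \<infinity>" .
  have "(\<integral>x. h x \<partial>\<nu>) = enn2real (\<integral>\<^sup>+x. ennreal (h x) \<partial>\<nu>)"
    using hm' h01 by (intro integral_eq_nn_integral) (auto simp: space_eq)
  also have "\<dots> \<le> enn2real ((\<integral>\<^sup>+x. ennreal (h x) \<partial>\<theta>) + ennreal c)"
    using nn_le finite by (intro enn2real_mono) auto
  also have "\<dots> = (\<integral>x. h x \<partial>\<theta>) + c"
    using finite \<open>c \<ge> 0\<close> hm h01 by (simp add: enn2real_plus integral_eq_nn_integral)
  finally show ?thesis .
qed

lemma evaluation_real_distribution: "evaluation \<theta> \<Longrightarrow> real_distribution \<theta>"
  by (simp add: evaluation_def real_distribution_def real_distribution_axioms_def)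

lemma evaluation_negative_null: "evaluation \<theta> \<Longrightarrow> {..<0} \<in> null_sets \<theta>"
  by (simp add: evaluation_def null_sets_def)

lemma evaluation_AE_nonneg: "evaluation \<theta> \<Longrightarrow> AE x in \<theta>. 0 \<le> x"
  by (erule AE_I'[OF evaluation_negative_null]) auto

context real_distribution
begin

lemma abs_prob_diff_le_1: "\<bar>prob A - prob B\<bar> \<le> 1"
  using measure_nonneg[of M A] measure_nonneg[of M B] prob_le_1[of A] prob_le_1[of B] by linarith

lemma TV_bdd_above:
  "bdd_above ((\<lambda>Q. \<bar>prob Q - prob ((\<lambda>q. q + s) ` Q)\<bar>) ` {Q. Q \<in> sets borel \<and> Q \<subseteq> {0..}})"
  by (rule bdd_aboveI[where M = 1]) (auto simp: abs_prob_diff_le_1)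

lemma TV_ge:
  "Q \<in> sets borel \<Longrightarrow> Q \<subseteq> {0..} \<Longrightarrow> \<bar>prob Q - prob ((\<lambda>q. q + s) ` Q)\<bar> \<le> TV s M"
  unfolding TV_def by (rule cSUP_upper[OF _ TV_bdd_above]) simp

lemma TV_nonneg: "0 \<le> TV s M"
  using TV_ge[of "{}" s] by simp

lemma TV_le_1: "TV s M \<le> 1"
  unfolding TV_def
  by (rule cSUP_least) (auto simp: abs_prob_diff_le_1)

lemma TV_le_SUP: "s \<in> {0..S} \<Longrightarrow> TV s M \<le> (SUP s\<in>{0..S}. TV s M)"
  by (rule cSUP_upper) (auto intro!: bdd_aboveI[where M = 1] TV_le_1)

lemma SUP_TV_nonneg: "0 \<le> S \<Longrightarrow> 0 \<le> (SUP s\<in>{0..S}. TV s M)"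
  using TV_le_SUP[of 0 S] TV_nonneg[of 0] by simp

lemma measure_greaterThan_tendsto_0: "((\<lambda>S. prob {S<..}) \<longlongrightarrow> 0) at_top"
proof -
  have "prob {S<..} = 1 - cdf M S" for S
    using prob_compl[of "{..S}"] by (simp add: cdf_def Compl_eq_Diff_UNIV[symmetric])
  moreover have "((\<lambda>S. 1 - cdf M S) \<longlongrightarrow> 1 - 1) at_top"
    by (intro tendsto_diff tendsto_const cdf_lim_at_top_prob)
  ultimately show ?thesis by simp
qed

lemma real_distribution_shift_eval: "real_distribution (shift_eval t M)"
  unfolding shift_eval_def by (rule real_distribution_distr) simp

lemma integral_shift_eval:
  fixes h :: "real \<Rightarrow> 'b::{banach, second_countable_topology}"
  shows "h \<in> borel_measurable borel \<Longrightarrow> (\<integral>x. h x \<partial>shift_eval t M) = (\<integral>s. h (s + t) \<partial>M)"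
  unfolding shift_eval_def by (rule integral_distr[of "\<lambda>s. s + t" M borel h]) simp_all

end

lemma measure_shift_eval_le_TV:
  assumes ev: "evaluation \<theta>" and "0 \<le> s" and A: "A \<in> sets borel"
  shows "measure (shift_eval s \<theta>) A \<le> measure \<theta> A + TV s \<theta>"
proof -
  interpret real_distribution \<theta> using ev by (rule evaluation_real_distribution)
  define P where "P = (\<lambda>t. t + s) -` A"
  have P: "P \<in> sets borel"
    using measurable_sets[OF _ A, of "\<lambda>t. t + s" borel] by (simp add: P_def)
  have "measure (shift_eval s \<theta>) A = prob P"
    unfolding shift_eval_def P_def using A by (subst measure_distr) simp_all
  also have "\<dots> = prob (P - {..<0})"
    using P evaluation_negative_null[OF ev] by (simp add: measure_Diff_null_set)
  also have "\<dots> \<le> prob ((\<lambda>q. q + s) ` (P - {..<0})) + TV s \<theta>"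
  proof -
    have "P - {..<0} \<subseteq> {0..}" by (auto simp: not_less)
    hence "\<bar>prob (P - {..<0}) - prob ((\<lambda>q. q + s) ` (P - {..<0}))\<bar> \<le> TV s \<theta>"
      using P by (intro TV_ge) auto
    thus ?thesis by (simp add: abs_le_iff)
  qed
  also have "(\<lambda>q. q + s) ` (P - {..<0}) = A \<inter> {s..}"
    unfolding P_def by (auto simp: image_iff intro!: bexI[where x = "_ - s"])
  also have "prob (A \<inter> {s..}) \<le> prob A"
    using A by (intro finite_measure_mono) auto
  finally show ?thesis by simp
qed

lemma integral_shift_le_TV:
  assumes ev: "evaluation \<theta>" and "0 \<le> s"
    and hm: "h \<in> borel_measurable borel" and h01: "\<And>x. 0 \<le> h x \<and> h x \<le> 1"
  shows "(\<integral>t. h (t + s) \<partial>\<theta>) \<le> (\<integral>t. h t \<partial>\<theta>) + TV s \<theta>"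
proof -
  interpret real_distribution \<theta> using ev by (rule evaluation_real_distribution)
  interpret \<nu>: real_distribution "shift_eval s \<theta>" by (rule real_distribution_shift_eval)
  have "(\<integral>t. h (t + s) \<partial>\<theta>) = (\<integral>t. h t \<partial>shift_eval s \<theta>)"
    using hm by (rule integral_shift_eval[symmetric])
  also have "\<dots> \<le> (\<integral>t. h t \<partial>\<theta>) + TV s \<theta>"
    using hm h01 measure_shift_eval_le_TV[OF ev \<open>0 \<le> s\<close>]
    by (intro integral_le_of_measure_le_plus TV_nonneg) simp_all
  finally show ?thesis .
qed

lemma (in prob_space) integral_le_nonneg_const:
  fixes f :: "'a \<Rightarrow> real"
  assumes "0 \<le> c" and "AE x in M. f x \<le> c"
  shows "(\<integral>x. f x \<partial>M) \<le> c"
  using assms integral_le_const[of f c] by (cases "integrable M f") (simp_all add: not_integrable_integral_eq)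

lemma integrable_pair_add:
  fixes h :: "real \<Rightarrow> real"
  assumes "real_distribution \<mu>" "real_distribution \<theta>"
    and "h \<in> borel_measurable borel" and "\<And>x. \<bar>h x\<bar> \<le> B"
  shows "integrable (\<mu> \<Otimes>\<^sub>M \<theta>) (\<lambda>(x, y). h (x + y))"
proof -
  interpret \<mu>: real_distribution \<mu> by fact
  interpret \<theta>: real_distribution \<theta> by fact
  interpret prob_space "\<mu> \<Otimes>\<^sub>M \<theta>"
    by (simp add: \<mu>.prob_space_axioms \<theta>.prob_space_axioms prob_space_pair)
  show ?thesis
    using assms by (intro integrable_const_bound[where B = B]) (auto simp: split_beta)
qed

lemma integral_translate_le_step:
  fixes h :: "real \<Rightarrow> real"
  assumes ev: "evaluation \<theta>"
    and hm: "h \<in> borel_measurable borel" and h01: "\<And>x. 0 \<le> h x \<and> h x \<le> 1"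
    and "0 \<le> x" and "0 \<le> S"
  shows "(\<integral>y. h (x + y) \<partial>\<theta>) \<le> (\<integral>t. h t \<partial>\<theta>) + (SUP s\<in>{0..S}. TV s \<theta>) + indicator {S<..} x"
proof -
  interpret real_distribution \<theta> using ev by (rule evaluation_real_distribution)
  have "0 \<le> (\<integral>t. h t \<partial>\<theta>)" using h01 by simp
  have "0 \<le> (SUP s\<in>{0..S}. TV s \<theta>)" using \<open>0 \<le> S\<close> by (rule SUP_TV_nonneg)
  show ?thesis
  proof (cases "x \<le> S")
    case True
    have "(\<integral>y. h (x + y) \<partial>\<theta>) \<le> (\<integral>t. h t \<partial>\<theta>) + TV x \<theta>"
      using integral_shift_le_TV[OF ev \<open>0 \<le> x\<close> hm h01] by (simp add: add.commute)
    also have "TV x \<theta> \<le> (SUP s\<in>{0..S}. TV s \<theta>)" using True \<open>0 \<le> x\<close> by (intro TV_le_SUP) simp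
    finally show ?thesis using True by simp
  next
    case False
    have "(\<integral>y. h (x + y) \<partial>\<theta>) \<le> 1" using h01 by (intro integral_le_nonneg_const) auto
    thus ?thesis using False \<open>0 \<le> (\<integral>t. h t \<partial>\<theta>)\<close> \<open>0 \<le> (SUP s\<in>{0..S}. TV s \<theta>)\<close> by simp
  qed
qed

lemma le_integral_plus_TV_plus_tail:
  fixes h :: "real \<Rightarrow> real"
  assumes ev\<theta>: "evaluation \<theta>" and ev\<mu>: "evaluation \<mu>"
    and hm: "h \<in> borel_measurable borel" and h01: "\<And>x. 0 \<le> h x \<and> h x \<le> 1" and "0 \<le> S"
    and I: "\<And>t. 0 \<le> t \<Longrightarrow> I \<le> (\<integral>s. h (s + t) \<partial>\<mu>)"
  shows "I \<le> (\<integral>t. h t \<partial>\<theta>) + (SUP s\<in>{0..S}. TV s \<theta>) + measure \<mu> {S<..}"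
proof -
  interpret \<theta>: real_distribution \<theta> using ev\<theta> by (rule evaluation_real_distribution)
  interpret \<mu>: real_distribution \<mu> using ev\<mu> by (rule evaluation_real_distribution)
  interpret \<mu>\<theta>: pair_sigma_finite \<mu> \<theta>
    by (simp add: pair_sigma_finite_def \<mu>.sigma_finite_measure_axioms \<theta>.sigma_finite_measure_axioms)
  interpret \<theta>\<mu>: pair_sigma_finite \<theta> \<mu>
    by (simp add: pair_sigma_finite_def \<mu>.sigma_finite_measure_axioms \<theta>.sigma_finite_measure_axioms)
  define H where "H = (\<integral>t. h t \<partial>\<theta>)"
  define R where "R = (SUP s\<in>{0..S}. TV s \<theta>)"
  have h_abs: "\<bar>h x\<bar> \<le> 1" for x using h01[of x] by simp
  have tail_int: "integrable \<mu> (indicator {S<..} :: real \<Rightarrow> real)"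
    by (intro integrable_real_indicator) (simp_all add: less_top[symmetric])
  hence step_int: "integrable \<mu> (\<lambda>x. H + R + indicator {S<..} x)" by simp
  have swapped_int: "integrable (\<theta> \<Otimes>\<^sub>M \<mu>) (\<lambda>(y, x). h (y + x))"
    using \<theta>.real_distribution_axioms \<mu>.real_distribution_axioms hm h_abs by (rule integrable_pair_add)
  have "integrable \<theta> (\<lambda>y. \<integral>x. h (x + y) \<partial>\<mu>)"
    using \<theta>\<mu>.integrable_fst'[OF swapped_int] by (simp add: add.commute)
  hence "I \<le> (\<integral>y. (\<integral>x. h (x + y) \<partial>\<mu>) \<partial>\<theta>)"
    using evaluation_AE_nonneg[OF ev\<theta>] by (intro \<theta>.integral_ge_const) (auto simp: I)
  also have "\<dots> = (\<integral>x. (\<integral>y. h (x + y) \<partial>\<theta>) \<partial>\<mu>)"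
    using integrable_pair_add[OF \<mu>.real_distribution_axioms \<theta>.real_distribution_axioms hm h_abs]
    by (intro \<mu>\<theta>.Fubini_integral) (simp add: split_beta')
  also have "\<dots> \<le> (\<integral>x. H + R + indicator {S<..} x \<partial>\<mu>)"
  proof (rule integral_mono_AE'[OF step_int])
    show "AE x in \<mu>. (\<integral>y. h (x + y) \<partial>\<theta>) \<le> H + R + indicator {S<..} x"
      using evaluation_AE_nonneg[OF ev\<mu>] unfolding H_def R_def
      by eventually_elim (rule integral_translate_le_step[OF ev\<theta> hm h01 _ \<open>0 \<le> S\<close>])
  qed (use \<theta>.SUP_TV_nonneg[OF \<open>0 \<le> S\<close>] h01 in \<open>auto simp: R_def H_def\<close>)
  also have "\<dots> = H + R + measure \<mu> {S<..}"
    using tail_int by (subst Bochner_Integration.integral_add) (simp_all add: \<mu>.prob_space[simplified])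
  finally show ?thesis unfolding H_def R_def .
qed

lemma controls_nonempty: "controls \<noteq> {}"
proof -
  have "(\<lambda>_. undefined) \<in> controls" unfolding controls_def by simp
  thus ?thesis by blast
qed

lemma V_le_cost:
  assumes "\<And>y u. 0 \<le> g y u" and "u \<in> controls"
  shows "V f g \<theta> y0 \<le> (\<integral>s. g (traj f u y0 s) (u s) \<partial>\<theta>)"
  unfolding V_def using assms by (intro cINF_lower bdd_belowI[where m = 0]) auto

lemma V_nonneg:
  assumes "\<And>y u. 0 \<le> g y u"
  shows "0 \<le> V f g \<theta> y0"
  unfolding V_def using assms controls_nonempty by (intro cINF_greatest) auto

lemma INF_V_shift_le_V_plus_TV_plus_tail:
  fixes f :: "'y::euclidean_space \<Rightarrow> 'u::metric_space \<Rightarrow> 'y" and g :: "'y \<Rightarrow> 'u \<Rightarrow> real"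
  assumes g01: "\<And>y u. 0 \<le> g y u \<and> g y u \<le> 1"
    and ev\<theta>: "evaluation \<theta>" and ev\<mu>: "evaluation \<mu>" and "0 \<le> S"
  shows "(INF t\<in>{0..}. V f g (shift_eval t \<mu>) y0)
           \<le> V f g \<theta> y0 + (SUP s\<in>{0..S}. TV s \<theta>) + measure \<mu> {S<..}"
proof -
  interpret \<theta>: real_distribution \<theta> using ev\<theta> by (rule evaluation_real_distribution)
  interpret \<mu>: real_distribution \<mu> using ev\<mu> by (rule evaluation_real_distribution)
  define I where "I = (INF t\<in>{0..}. V f g (shift_eval t \<mu>) y0)"
  define R where "R = (SUP s\<in>{0..S}. TV s \<theta>) + measure \<mu> {S<..}"
  have g0: "\<And>y u. 0 \<le> g y u" using g01 by blast
  have "I - R \<le> (\<integral>s. g (traj f u y0 s) (u s) \<partial>\<theta>)" if u: "u \<in> controls" for u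
  proof -
    define h where "h s = g (traj f u y0 s) (u s)" for s
    have I_le: "I \<le> (\<integral>s. h s \<partial>shift_eval t \<mu>)" if "0 \<le> t" for t
    proof -
      have "I \<le> V f g (shift_eval t \<mu>) y0"
        unfolding I_def using that V_nonneg[OF g0] by (intro cINF_lower bdd_belowI[where m = 0]) auto
      also have "\<dots> \<le> (\<integral>s. h s \<partial>shift_eval t \<mu>)"
        unfolding h_def using g0 u by (rule V_le_cost)
      finally show ?thesis .
    qed
    show ?thesis
    proof (cases "h \<in> borel_measurable borel")
      case True
      have "I \<le> (\<integral>s. h (s + t) \<partial>\<mu>)" if "0 \<le> t" for t
        using I_le[OF that] \<mu>.integral_shift_eval[OF True] by simp
      hence "I \<le> (\<integral>s. h s \<partial>\<theta>) + R"
        unfolding R_def using le_integral_plus_TV_plus_tail[OF ev\<theta> ev\<mu> True _ \<open>0 \<le> S\<close>] g01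
        by (simp add: h_def add.assoc)
      thus ?thesis by (simp add: h_def)
    next
      case False
      \<comment> \<open>a non-measurable running cost has Bochner integral 0 under every evaluation\<close>
      moreover have "sets (shift_eval 0 \<mu>) = sets borel" by (simp add: shift_eval_def)
      ultimately have "\<not> integrable (shift_eval 0 \<mu>) h"
        by (metis borel_measurable_integrable measurable_cong_sets)
      hence "I \<le> 0" using I_le[of 0] by (simp add: not_integrable_integral_eq)
      moreover have "0 \<le> R"
        unfolding R_def using \<theta>.SUP_TV_nonneg[OF \<open>0 \<le> S\<close>] by simp
      moreover have "0 \<le> (\<integral>s. h s \<partial>\<theta>)" using g0 by (simp add: h_def)
      ultimately show ?thesis by (simp add: h_def)
    qed
  qed
  hence "I - R \<le> V f g \<theta> y0"
    unfolding V_def using controls_nonempty by (intro cINF_greatest) auto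
  thus ?thesis unfolding I_def R_def by simp
qed

lemma ereal_le_liminf_of_eventually:
  fixes x :: "nat \<Rightarrow> real"
  assumes "\<And>\<epsilon>. 0 < \<epsilon> \<Longrightarrow> eventually (\<lambda>k. c - \<epsilon> \<le> x k) sequentially"
  shows "ereal c \<le> liminf (\<lambda>k. ereal (x k))"
  unfolding le_Liminf_iff
proof (intro allI impI)
  fix y assume "y < ereal c"
  then obtain r where "y < ereal r" "r < c"
    using ereal_dense2[OF \<open>y < ereal c\<close>] by auto
  have "eventually (\<lambda>k. c - (c - r) / 2 \<le> x k) sequentially"
    using assms \<open>r < c\<close> by simp
  thus "eventually (\<lambda>k. y < ereal (x k)) sequentially"
  proof eventually_elim
    case (elim k)
    hence "ereal r < ereal (x k)" using \<open>r < c\<close> by (simp add: field_simps)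
    thus ?case using \<open>y < ereal r\<close> by (rule less_trans[rotated])
  qed
qed

lemma INF_V_shift_le_liminf_V:
  fixes f :: "'y::euclidean_space \<Rightarrow> 'u::metric_space \<Rightarrow> 'y" and g :: "'y \<Rightarrow> 'u \<Rightarrow> real"
    and \<theta> :: "nat \<Rightarrow> real measure"
  assumes g01: "\<And>y u. 0 \<le> g y u \<and> g y u \<le> 1"
    and ev\<theta>: "\<And>k. evaluation (\<theta> k)" and lt: "long_term \<theta>" and ev\<mu>: "evaluation \<mu>"
  shows "ereal (INF t\<in>{0..}. V f g (shift_eval t \<mu>) y0) \<le> liminf (\<lambda>k. ereal (V f g (\<theta> k) y0))"
proof (rule ereal_le_liminf_of_eventually)
  fix \<epsilon> :: real assume "0 < \<epsilon>"
  interpret \<mu>: real_distribution \<mu> using ev\<mu> by (rule evaluation_real_distribution)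
  have "eventually (\<lambda>S. measure \<mu> {S<..} < \<epsilon> / 2) at_top"
    using \<open>0 < \<epsilon>\<close> by (intro order_tendstoD(2)[OF \<mu>.measure_greaterThan_tendsto_0]) simp
  then obtain N where N: "\<And>S. N \<le> S \<Longrightarrow> measure \<mu> {S<..} < \<epsilon> / 2"
    by (auto simp: eventually_at_top_linorder)
  define S where "S = max N 1"
  have tail: "measure \<mu> {S<..} < \<epsilon> / 2" unfolding S_def by (rule N) simp
  have "0 < S" by (simp add: S_def)
  hence "(\<lambda>k. SUP s\<in>{0..S}. TV s (\<theta> k)) \<longlonglongrightarrow> 0"
    using lt unfolding long_term_def by blast
  hence "eventually (\<lambda>k. (SUP s\<in>{0..S}. TV s (\<theta> k)) < \<epsilon> / 2) sequentially"
    by (rule order_tendstoD(2)) (use \<open>0 < \<epsilon>\<close> in simp)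
  thus "eventually (\<lambda>k. (INF t\<in>{0..}. V f g (shift_eval t \<mu>) y0) - \<epsilon> \<le> V f g (\<theta> k) y0) sequentially"
  proof eventually_elim
    case (elim k)
    have "(INF t\<in>{0..}. V f g (shift_eval t \<mu>) y0)
            \<le> V f g (\<theta> k) y0 + (SUP s\<in>{0..S}. TV s (\<theta> k)) + measure \<mu> {S<..}"
      using \<open>0 < S\<close> by (intro INF_V_shift_le_V_plus_TV_plus_tail g01 ev\<theta> ev\<mu>) simp
    thus ?case using elim tail by simp
  qed
qed

theorem mainTheorem9:
  fixes f :: "'y::euclidean_space \<Rightarrow> 'u::metric_space \<Rightarrow> 'y"
    and g :: "'y \<Rightarrow> 'u \<Rightarrow> real"
    and L a :: real
    and \<theta> :: "nat \<Rightarrow> real measure"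
  assumes g_meas: "(\<lambda>(y, u). g y u) \<in> borel_measurable borel"
    and g_range: "\<And>y u. 0 \<le> g y u \<and> g y u \<le> 1"
    and f_meas: "(\<lambda>(y, u). f y u) \<in> borel_measurable borel"
    and L: "L \<ge> 0" and a: "a > 0"
    and f_lip: "\<And>y y' u. norm (f y u - f y' u) \<le> L * norm (y - y')"
    and f_growth: "\<And>y u. norm (f y u) \<le> a * (1 + norm y)"
    and eval: "\<And>k. evaluation (\<theta> k)"
    and lt: "long_term \<theta>"
  shows "(\<forall>\<mu> y0. evaluation \<mu> \<longrightarrow>
            ereal (INF t\<in>{0..}. V f g (shift_eval t \<mu>) y0)
              \<le> liminf (\<lambda>k. ereal (V f g (\<theta> k) y0)))
       \<and> (\<forall>y0. (SUP k. ereal (INF t\<in>{0..}. V f g (shift_eval t (\<theta> k)) y0))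
              \<le> liminf (\<lambda>k. ereal (V f g (\<theta> k) y0)))"
proof (intro conjI allI impI)
  fix \<mu> y0 assume "evaluation \<mu>"
  thus "ereal (INF t\<in>{0..}. V f g (shift_eval t \<mu>) y0) \<le> liminf (\<lambda>k. ereal (V f g (\<theta> k) y0))"
    by (rule INF_V_shift_le_liminf_V[OF g_range eval lt])
next
  fix y0
  show "(SUP k. ereal (INF t\<in>{0..}. V f g (shift_eval t (\<theta> k)) y0)) \<le> liminf (\<lambda>k. ereal (V f g (\<theta> k) y0))"
    by (intro SUP_least INF_V_shift_le_liminf_V[OF g_range eval lt eval])
qed

end
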